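(* Let $k\ge 1$, let $(A,t)$ be a $\mathcal{C}_k$-algebra and let $U\subseteq A$ be an ultrafilter of $A$. Then $$N=\bigcap_{i=0}^{k-1}\big(t^i(U)\cap \varphi(t^i(U))\big)$$ is a $c$-filter of $A$.
   Context: A De Morgan algebra is a bounded distributive lattice $\langle A,\wedge,\vee,0,1\rangle$ with a unary operation $\sim$ satisfying $\sim\sim x=x$ and $\sim(x\vee y)=\sim x\wedge\sim y$. A modal pseudocomplemented De Morgan algebra ($mpM$-algebra) is an algebra $\langle A,\wedge,\vee,\sim,{}^\ast,0,1\rangle$ such that $\langle A,\wedge,\vee,\sim,0,1\rangle$ is a De Morgan algebra, $x^\ast$ is the pseudocomplement of $x$ (i.e. $x\wedge y=0$ iff $y\le x^\ast$), and $x\vee\sim x\le x\vee x^\ast$ for all $x$. Put $\nabla x=\sim(\sim x\wedge x^\ast)$ and $\triangle x=\sim\nabla\sim x$. For an integer $k\ge1$, a $\mathcal{C}_k$-algebra is a pair $(A,t)$ where $A$ is an $mpM$-algebra and $t:A\to A$ is an automorphism of $mpM$-algebras with $t^k(x)=x$ for all $x$ (where $t^0=\mathrm{id}$, $t^n=t^{n-1}\circ t$). A $c$-filter of $A$ is a lattice filter $F$ of $A$ such that $x\in F$ implies $\triangle x\in F$ and $t(x)\in F$. An ultrafilter is a maximal proper lattice filter. For a prime filter $P$ of $A$, the Birula–Rasiowa transform is $\varphi(P)=A\setminus\{\sim x: x\in P\}$ (again a prime filter). *)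

theory Defs
  imports Main
begin

text \<open>Algebras are taken on a whole type 'a whose bounded distributive lattice
structure is given by the type classes; the De Morgan negation nt and the
pseudocomplement pc are explicit parameters.\<close>

definition de_morgan :: "('a::{distrib_lattice,bounded_lattice} \<Rightarrow> 'a) \<Rightarrow> bool" where
  "de_morgan nt \<longleftrightarrow> (\<forall>x. nt (nt x) = x) \<and> (\<forall>x y. nt (sup x y) = inf (nt x) (nt y))"

definition is_pseudocomplement :: "('a::{distrib_lattice,bounded_lattice} \<Rightarrow> 'a) \<Rightarrow> bool" where
  "is_pseudocomplement pc \<longleftrightarrow> (\<forall>x y. inf x y = bot \<longleftrightarrow> y \<le> pc x)"

definition mpM_algebra :: "('a::{distrib_lattice,bounded_lattice} \<Rightarrow> 'a) \<Rightarrow> ('a \<Rightarrow> 'a) \<Rightarrow> bool" where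
  "mpM_algebra nt pc \<longleftrightarrow> de_morgan nt \<and> is_pseudocomplement pc \<and>
     (\<forall>x. sup x (nt x) \<le> sup x (pc x))"

definition nabla :: "('a::{distrib_lattice,bounded_lattice} \<Rightarrow> 'a) \<Rightarrow> ('a \<Rightarrow> 'a) \<Rightarrow> 'a \<Rightarrow> 'a" where
  "nabla nt pc x = nt (inf (nt x) (pc x))"

definition delta :: "('a::{distrib_lattice,bounded_lattice} \<Rightarrow> 'a) \<Rightarrow> ('a \<Rightarrow> 'a) \<Rightarrow> 'a \<Rightarrow> 'a" where
  "delta nt pc x = nt (nabla nt pc (nt x))"

definition mpM_automorphism ::
  "('a::{distrib_lattice,bounded_lattice} \<Rightarrow> 'a) \<Rightarrow> ('a \<Rightarrow> 'a) \<Rightarrow> ('a \<Rightarrow> 'a) \<Rightarrow> bool" where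
  "mpM_automorphism nt pc t \<longleftrightarrow> bij t \<and>
     (\<forall>x y. t (inf x y) = inf (t x) (t y)) \<and> (\<forall>x y. t (sup x y) = sup (t x) (t y)) \<and>
     (\<forall>x. t (nt x) = nt (t x)) \<and> (\<forall>x. t (pc x) = pc (t x)) \<and>
     t bot = bot \<and> t top = top"

definition Ck_algebra ::
  "nat \<Rightarrow> ('a::{distrib_lattice,bounded_lattice} \<Rightarrow> 'a) \<Rightarrow> ('a \<Rightarrow> 'a) \<Rightarrow> ('a \<Rightarrow> 'a) \<Rightarrow> bool" where
  "Ck_algebra k nt pc t \<longleftrightarrow> mpM_algebra nt pc \<and> mpM_automorphism nt pc t \<and>
     (\<forall>x. (t ^^ k) x = x)"

definition lattice_filter :: "'a::{distrib_lattice,bounded_lattice} set \<Rightarrow> bool" where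
  "lattice_filter F \<longleftrightarrow> F \<noteq> {} \<and> (\<forall>x y. x \<in> F \<longrightarrow> x \<le> y \<longrightarrow> y \<in> F) \<and>
     (\<forall>x y. x \<in> F \<longrightarrow> y \<in> F \<longrightarrow> inf x y \<in> F)"

definition proper_filter :: "'a::{distrib_lattice,bounded_lattice} set \<Rightarrow> bool" where
  "proper_filter F \<longleftrightarrow> lattice_filter F \<and> F \<noteq> UNIV"

definition ultrafilter :: "'a::{distrib_lattice,bounded_lattice} set \<Rightarrow> bool" where
  "ultrafilter U \<longleftrightarrow> proper_filter U \<and> (\<forall>G. proper_filter G \<longrightarrow> U \<subseteq> G \<longrightarrow> G = U)"

definition c_filter ::
  "('a::{distrib_lattice,bounded_lattice} \<Rightarrow> 'a) \<Rightarrow> ('a \<Rightarrow> 'a) \<Rightarrow> ('a \<Rightarrow> 'a) \<Rightarrow> 'a set \<Rightarrow> bool" where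
  "c_filter nt pc t F \<longleftrightarrow> lattice_filter F \<and>
     (\<forall>x\<in>F. delta nt pc x \<in> F) \<and> (\<forall>x\<in>F. t x \<in> F)"

definition br_transform :: "('a \<Rightarrow> 'a) \<Rightarrow> 'a set \<Rightarrow> 'a set" where
  "br_transform nt P = UNIV - nt ` P"

end

theory Submission
  imports Defs
begin

text \<open>An ultrafilter U is prime, and so is each of its images V i = t^i(U) under the
automorphisms t^i. For a prime filter P the set P \<inter> \<phi>(P) is a filter, and it is closed under
\<triangle> = (\<lambda>x. x \<sqinter> pc(\<sim>x)): the mpM axiom applied to \<sim>x places \<sim>x \<squnion> pc(\<sim>x) in P, so
pc(\<sim>x) \<in> P by primeness, while x \<sqinter> \<sim>pc(\<sim>x) \<le> \<sim>x keeps \<sim>pc(\<sim>x) out of P.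
Hence the intersection N of the sets V i \<inter> \<phi>(V i) is a filter closed under \<triangle>. Finally t maps
V i \<inter> \<phi>(V i) into V (i+1) \<inter> \<phi>(V (i+1)) because it commutes with \<sim>, and V k = V 0,
so N is t-invariant.\<close>

definition prime_filter :: "'a::{distrib_lattice,bounded_lattice} set \<Rightarrow> bool" where
  "prime_filter P \<longleftrightarrow> proper_filter P \<and> (\<forall>a b. sup a b \<in> P \<longrightarrow> a \<in> P \<or> b \<in> P)"

lemma lattice_filter_top: "lattice_filter F \<Longrightarrow> top \<in> F"
  unfolding lattice_filter_def by auto

lemma lattice_filter_upward: "lattice_filter F \<Longrightarrow> x \<in> F \<Longrightarrow> x \<le> y \<Longrightarrow> y \<in> F"
  unfolding lattice_filter_def by blast

lemma lattice_filter_inf: "lattice_filter F \<Longrightarrow> x \<in> F \<Longrightarrow> y \<in> F \<Longrightarrow> inf x y \<in> F"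
  unfolding lattice_filter_def by blast

lemma lattice_filterI:
  assumes "top \<in> F" and "\<And>x y. x \<in> F \<Longrightarrow> x \<le> y \<Longrightarrow> y \<in> F"
    and "\<And>x y. x \<in> F \<Longrightarrow> y \<in> F \<Longrightarrow> inf x y \<in> F"
  shows "lattice_filter F"
  using assms unfolding lattice_filter_def by blast

lemma proper_filter_bot: "proper_filter F \<Longrightarrow> bot \<notin> F"
  unfolding proper_filter_def using lattice_filter_upward by fastforce

lemma prime_filter_lattice_filter: "prime_filter P \<Longrightarrow> lattice_filter P"
  unfolding prime_filter_def proper_filter_def by blast

lemma prime_filter_bot: "prime_filter P \<Longrightarrow> bot \<notin> P"
  unfolding prime_filter_def using proper_filter_bot by blast

lemma prime_filter_sup: "prime_filter P \<Longrightarrow> sup a b \<in> P \<Longrightarrow> a \<in> P \<or> b \<in> P"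
  unfolding prime_filter_def by blast

lemma lattice_filter_INT:
  assumes "\<And>i. i \<in> I \<Longrightarrow> lattice_filter (F i)"
  shows "lattice_filter (\<Inter>i\<in>I. F i)"
proof (rule lattice_filterI)
  show "top \<in> (\<Inter>i\<in>I. F i)" using lattice_filter_top[OF assms] by blast
  show "y \<in> (\<Inter>i\<in>I. F i)" if "x \<in> (\<Inter>i\<in>I. F i)" "x \<le> y" for x y
    using that lattice_filter_upward[OF assms] by blast
  show "inf x y \<in> (\<Inter>i\<in>I. F i)" if "x \<in> (\<Inter>i\<in>I. F i)" "y \<in> (\<Inter>i\<in>I. F i)" for x y
    using that lattice_filter_inf[OF assms] by blast
qed

lemma lattice_filter_Int: "lattice_filter F \<Longrightarrow> lattice_filter G \<Longrightarrow> lattice_filter (F \<inter> G)"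
  using lattice_filter_INT[of "{F, G}" id] by auto

lemma ultrafilter_disjoint_witness:
  assumes U: "ultrafilter U" and a: "a \<notin> U"
  shows "\<exists>u\<in>U. inf u a = bot"
proof -
  define G where "G = {y. \<exists>u\<in>U. inf u a \<le> y}"
  have filter_U: "lattice_filter U"
    using U unfolding ultrafilter_def proper_filter_def by auto
  have "lattice_filter G"
  proof (rule lattice_filterI)
    show "top \<in> G" using lattice_filter_top[OF filter_U] unfolding G_def by auto
    show "y \<in> G" if "x \<in> G" "x \<le> y" for x y
      using that order_trans unfolding G_def by blast
    show "inf x y \<in> G" if x: "x \<in> G" and y: "y \<in> G" for x y
    proof -
      obtain u v where "u \<in> U" "v \<in> U" "inf u a \<le> x" "inf v a \<le> y"
        using x y unfolding G_def by auto
      moreover have "inf (inf u v) a \<le> inf u a" "inf (inf u v) a \<le> inf v a"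
        by (intro inf_mono inf.cobounded1 inf.cobounded2 order_refl)+
      ultimately show ?thesis
        using lattice_filter_inf[OF filter_U] unfolding G_def by (blast intro: le_infI order_trans)
    qed
  qed
  moreover have "U \<subseteq> G" "a \<in> G"
    using lattice_filter_top[OF filter_U] unfolding G_def by (auto intro: le_infI1)
  ultimately have "bot \<in> G"
    using U a unfolding ultrafilter_def proper_filter_def by blast
  then show ?thesis unfolding G_def by (auto simp: bot_unique)
qed

lemma ultrafilter_prime:
  assumes U: "ultrafilter U"
  shows "prime_filter U"
proof -
  have proper_U: "proper_filter U" using U unfolding ultrafilter_def by auto
  then have filter_U: "lattice_filter U" unfolding proper_filter_def by auto
  have "a \<in> U \<or> b \<in> U" if ab: "sup a b \<in> U" for a b
  proof (rule ccontr)
    assume "\<not> (a \<in> U \<or> b \<in> U)"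
    then obtain u v where u: "u \<in> U" "inf u a = bot" and v: "v \<in> U" "inf v b = bot"
      using ultrafilter_disjoint_witness[OF U] by blast
    have "inf (inf u v) (sup a b) \<in> U"
      using lattice_filter_inf[OF filter_U] u v ab by blast
    moreover have "inf (inf u v) (sup a b) = bot"
      using u(2) v(2) by (simp add: inf_sup_distrib1) (metis inf.assoc inf_bot_right inf.left_commute)
    ultimately show False using proper_filter_bot[OF proper_U] by simp
  qed
  with proper_U show ?thesis unfolding prime_filter_def by auto
qed

lemma funpow_inf_hom:
  fixes f :: "'a::lattice \<Rightarrow> 'a"
  assumes "\<And>x y. f (inf x y) = inf (f x) (f y)"
  shows "(f ^^ n) (inf x y) = inf ((f ^^ n) x) ((f ^^ n) y)"
  by (induction n) (simp_all add: assms)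

lemma funpow_sup_hom:
  fixes f :: "'a::lattice \<Rightarrow> 'a"
  assumes "\<And>x y. f (sup x y) = sup (f x) (f y)"
  shows "(f ^^ n) (sup x y) = sup ((f ^^ n) x) ((f ^^ n) y)"
  by (induction n) (simp_all add: assms)

lemma prime_filter_vimage:
  assumes h_inf: "\<And>x y. h (inf x y) = inf (h x) (h y)"
    and h_sup: "\<And>x y. h (sup x y) = sup (h x) (h y)"
    and h_top: "h top = top" and h_bot: "h bot = bot" and P: "prime_filter P"
  shows "prime_filter (h -` P)"
proof -
  have h_mono: "h x \<le> h y" if "x \<le> y" for x y
    using h_inf[of x y] that by (metis inf.absorb1 inf.cobounded2)
  have "lattice_filter (h -` P)"
  proof (rule lattice_filterI)
    show "top \<in> h -` P"
      using lattice_filter_top[OF prime_filter_lattice_filter[OF P]] by (simp add: h_top)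
    show "y \<in> h -` P" if "x \<in> h -` P" "x \<le> y" for x y
      using that h_mono lattice_filter_upward[OF prime_filter_lattice_filter[OF P]] by simp
    show "inf x y \<in> h -` P" if "x \<in> h -` P" "y \<in> h -` P" for x y
      using that lattice_filter_inf[OF prime_filter_lattice_filter[OF P]] by (simp add: h_inf)
  qed
  moreover have "bot \<notin> h -` P"
    using prime_filter_bot[OF P] by (simp add: h_bot)
  moreover have "a \<in> h -` P \<or> b \<in> h -` P" if "sup a b \<in> h -` P" for a b
    using that prime_filter_sup[OF P] by (simp add: h_sup)
  ultimately show ?thesis
    unfolding prime_filter_def proper_filter_def by blast
qed

lemma prime_filter_image:
  assumes f: "bij f" and f_inf: "\<And>x y. f (inf x y) = inf (f x) (f y)"
    and f_sup: "\<And>x y. f (sup x y) = sup (f x) (f y)" and P: "prime_filter P"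
  shows "prime_filter (f ` P)"
proof -
  have f_inv: "f (inv f y) = y" for y
    using f by (simp add: bij_is_surj surj_f_inv_f)
  have inv_inf: "inv f (inf x y) = inf (inv f x) (inv f y)" for x y
  proof -
    have "inv f (inf x y) = inv f (f (inf (inv f x) (inv f y)))" by (simp add: f_inf f_inv)
    then show ?thesis by (simp add: bij_is_inj[OF f])
  qed
  have inv_sup: "inv f (sup x y) = sup (inv f x) (inv f y)" for x y
  proof -
    have "inv f (sup x y) = inv f (f (sup (inv f x) (inv f y)))" by (simp add: f_sup f_inv)
    then show ?thesis by (simp add: bij_is_inj[OF f])
  qed
  have "inv f top = top"
    using inv_inf[of top "f top"] by (simp add: bij_is_inj[OF f])
  moreover have "inv f bot = bot"
    using inv_sup[of bot "f bot"] by (simp add: bij_is_inj[OF f])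
  moreover have "f ` P = inv f -` P"
    using bij_vimage_eq_inv_image[OF bij_imp_bij_inv[OF f]] by (simp add: inv_inv_eq[OF f])
  ultimately show ?thesis
    using prime_filter_vimage[OF inv_inf inv_sup _ _ P] by simp
qed

lemma image_br_transform:
  assumes "bij f" and "\<And>x. f (nt x) = nt (f x)"
  shows "f ` br_transform nt P = br_transform nt (f ` P)"
proof -
  have "f ` nt ` P = nt ` f ` P" using assms(2) by (simp add: image_image)
  then show ?thesis
    unfolding br_transform_def using assms(1)
    by (simp add: image_set_diff bij_is_inj bij_is_surj)
qed

lemma INT_closed_under_cyclic_shift:
  assumes shift: "\<And>i. f ` G i \<subseteq> G (Suc i)" and cycle: "G k = G 0"
    and x: "x \<in> (\<Inter>i\<in>{0..<k}. G i)"
  shows "f x \<in> (\<Inter>i\<in>{0..<k}. G i)"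
proof -
  have "f x \<in> G j" if "j < k" for j
  proof (cases j)
    case 0
    with that have "f x \<in> G (Suc (k - 1))" using shift x by fastforce
    then show ?thesis using 0 that cycle by simp
  next
    case (Suc i)
    then show ?thesis using shift x that by fastforce
  qed
  then show ?thesis by simp
qed

context
  fixes nt :: "'a::{distrib_lattice,bounded_lattice} \<Rightarrow> 'a"
  assumes nt: "de_morgan nt"
begin

lemma nt_nt [simp]: "nt (nt x) = x"
  using nt unfolding de_morgan_def by auto

lemma nt_sup: "nt (sup x y) = inf (nt x) (nt y)"
  using nt unfolding de_morgan_def by auto

lemma nt_inf: "nt (inf x y) = sup (nt x) (nt y)"
  by (metis nt_nt nt_sup)

lemma nt_antimono: "x \<le> y \<Longrightarrow> nt y \<le> nt x"
  by (metis inf.cobounded1 nt_sup sup.absorb2)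

lemma nt_top: "nt top = bot"
  using nt_antimono[of "nt bot" top] by (simp add: bot_unique)

lemma mem_br_transform: "x \<in> br_transform nt P \<longleftrightarrow> nt x \<notin> P"
  unfolding br_transform_def by (auto intro: image_eqI[of _ nt "nt x" for x])

lemma br_transform_filter:
  assumes P: "prime_filter P"
  shows "lattice_filter (br_transform nt P)"
proof (rule lattice_filterI)
  show "top \<in> br_transform nt P"
    using prime_filter_bot[OF P] by (simp add: mem_br_transform nt_top)
  show "y \<in> br_transform nt P" if "x \<in> br_transform nt P" "x \<le> y" for x y
    using that nt_antimono lattice_filter_upward[OF prime_filter_lattice_filter[OF P]]
    by (auto simp: mem_br_transform)
  show "inf x y \<in> br_transform nt P" if "x \<in> br_transform nt P" "y \<in> br_transform nt P" for x y
    using that prime_filter_sup[OF P] by (auto simp: mem_br_transform nt_inf)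
qed

lemma delta_eq_inf_pc_nt: "delta nt pc x = inf x (pc (nt x))"
  unfolding delta_def nabla_def by simp

lemma mpM_sup_nt_le_sup_pc_nt:
  assumes "mpM_algebra nt pc"
  shows "sup (nt x) x \<le> sup (nt x) (pc (nt x))"
  using assms unfolding mpM_algebra_def by (metis nt_nt)

lemma inf_nt_pc_nt_le:
  assumes "mpM_algebra nt pc"
  shows "inf x (nt (pc (nt x))) \<le> nt x"
proof -
  have "nt (sup (nt x) (pc (nt x))) \<le> nt (sup (nt x) x)"
    using mpM_sup_nt_le_sup_pc_nt[OF assms] by (rule nt_antimono)
  then have "inf x (nt (pc (nt x))) \<le> inf x (nt x)"
    by (simp add: nt_sup inf_commute)
  then show ?thesis by (simp add: le_infE)
qed

lemma delta_mem_prime_br_transform: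
  assumes M: "mpM_algebra nt pc" and P: "prime_filter P"
    and x: "x \<in> P \<inter> br_transform nt P"
  shows "delta nt pc x \<in> P \<inter> br_transform nt P"
proof -
  note up = lattice_filter_upward[OF prime_filter_lattice_filter[OF P]]
  note meet = lattice_filter_inf[OF prime_filter_lattice_filter[OF P]]
  note prime = prime_filter_sup[OF P]
  from x have x_P: "x \<in> P" and nt_x: "nt x \<notin> P"
    by (auto simp: mem_br_transform)
  have "sup (nt x) (pc (nt x)) \<in> P"
    using up[OF x_P] mpM_sup_nt_le_sup_pc_nt[OF M] by (meson sup_ge2 order_trans)
  then have "pc (nt x) \<in> P" using prime nt_x by blast
  moreover have "nt (pc (nt x)) \<notin> P"
    using up meet[OF x_P] inf_nt_pc_nt_le[OF M] nt_x by blast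
  ultimately show ?thesis
    using meet[OF x_P] prime nt_x by (auto simp: delta_eq_inf_pc_nt mem_br_transform nt_inf)
qed

end

theorem proposition2p4:
  fixes k :: nat
    and nt pc t :: "'a::{distrib_lattice,bounded_lattice} \<Rightarrow> 'a"
    and U :: "'a set"
  assumes "k \<ge> 1"
    and "Ck_algebra k nt pc t"
    and "ultrafilter U"
  shows "c_filter nt pc t
           (\<Inter>i\<in>{0..<k}. (t ^^ i) ` U \<inter> br_transform nt ((t ^^ i) ` U))"
proof -
  have M: "mpM_algebra nt pc" and period: "t ^^ k = id"
    and t: "bij t" "\<And>x y. t (inf x y) = inf (t x) (t y)"
      "\<And>x y. t (sup x y) = sup (t x) (t y)" "\<And>x. t (nt x) = nt (t x)"
    using assms(2) unfolding Ck_algebra_def mpM_automorphism_def by auto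
  have DM: "de_morgan nt" using M unfolding mpM_algebra_def by auto
  define V where "V i = (t ^^ i) ` U" for i
  define W where "W i = V i \<inter> br_transform nt (V i)" for i
  have prime_V: "prime_filter (V i)" for i
    unfolding V_def using ultrafilter_prime[OF assms(3)]
    by (intro prime_filter_image bij_fn funpow_inf_hom funpow_sup_hom t)
  have "t ` V i = V (Suc i)" for i
    by (simp add: V_def image_image)
  then have shift: "t ` W i \<subseteq> W (Suc i)" for i
    unfolding W_def by (metis image_Int_subset image_br_transform[of t nt, OF t(1,4)])
  have cycle: "W k = W 0"
    unfolding W_def V_def period by simp
  show ?thesis
    unfolding c_filter_def V_def[symmetric] W_def[symmetric]
  proof (intro conjI ballI)
    show "lattice_filter (\<Inter>i\<in>{0..<k}. W i)"
      using lattice_filter_Int prime_filter_lattice_filter br_transform_filter[OF DM] prime_V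
      unfolding W_def by (intro lattice_filter_INT) blast
    show "delta nt pc x \<in> (\<Inter>i\<in>{0..<k}. W i)" if "x \<in> (\<Inter>i\<in>{0..<k}. W i)" for x
      using that delta_mem_prime_br_transform[OF DM M prime_V] unfolding W_def by blast
    show "t x \<in> (\<Inter>i\<in>{0..<k}. W i)" if "x \<in> (\<Inter>i\<in>{0..<k}. W i)" for x
      using that by (rule INT_closed_under_cyclic_shift[of t W, OF shift cycle])
  qed
qed

end
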